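(* Let $Q$ be a quadrilateral in $K^2$. Two distinct bisectors of $Q$ share the same midpoint if and only if the vertices of $Q$ are the vertices of a parallelogram. In this case, the shared midpoint is the centroid of $Q$.
   Context: $K$ is a field of characteristic $\neq 2$; we work in $K^2$ inside the projective plane. A quadrilateral $Q=ABA'B'$ consists of four distinct lines $A,B,A',B'$ (sides), not all through one point, with adjacent sides ($A,B$; $B,A'$; $A',B'$; $B',A$) not parallel; opposite sides may be parallel. Vertices: $A\cap B$, $B\cap A'$, $A'\cap B'$, $B'\cap A$ (two may coincide if three sides are concurrent). The centroid is the midpoint of the midpoints of the diagonals (the lines through nonadjacent vertices), equivalently the average of the four vertices. A parallelogram is a quadrilateral whose pairs of opposite sides are parallel. A line $\ell$ crosses a pair $\{\ell_1,\ell_2\}$ if it is distinct from both and not parallel to both; $\mathrm{mid}_{\{\ell_1,\ell_2\}}(\ell)$ is the midpoint of the points where $\ell$ meets $\ell_1,\ell_2$ (the point at infinity of $\ell$ if one of them is at infinity). $\ell$ bisects $Q$ (is a bisector) if $\mathrm{mid}_{\mathsf P}(\ell)$ is the same for all pairs $\mathsf P$ among $\{A,A'\},\{B,B'\}$ that $\ell$ crosses; this common point is the midpoint of the bisector. *)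

theory Defs
  imports Main
begin

text \<open>Points of the projective plane are either
finite points or points at infinity; a point at infinity is represented canonically by the
direction space of (any) line through it.\<close>

datatype 'a ppoint = Fin "'a \<times> 'a" | Inf "('a \<times> 'a) set"

definition is_line :: "('a::field \<times> 'a) set \<Rightarrow> bool" where
  "is_line L \<longleftrightarrow> (\<exists>a b c. (a, b) \<noteq> (0, 0) \<and> L = {(x, y). a * x + b * y = c})"

definition dir :: "('a::field \<times> 'a) set \<Rightarrow> ('a \<times> 'a) set" where
  "dir L = {v. \<forall>p\<in>L. (fst p + fst v, snd p + snd v) \<in> L}"

definition parallel :: "('a::field \<times> 'a) set \<Rightarrow> ('a \<times> 'a) set \<Rightarrow> bool" where
  "parallel L M \<longleftrightarrow> L = M \<or> L \<inter> M = {}"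

definition pt_mid :: "('a::field \<times> 'a) \<Rightarrow> ('a \<times> 'a) \<Rightarrow> ('a \<times> 'a)" where
  "pt_mid p q = ((fst p + fst q) / 2, (snd p + snd q) / 2)"

definition meet :: "('a::field \<times> 'a) set \<Rightarrow> ('a \<times> 'a) set \<Rightarrow> 'a ppoint" where
  "meet l L = (if l \<inter> L = {} then Inf (dir l) else Fin (THE p. p \<in> l \<and> p \<in> L))"

definition mid :: "('a::field \<times> 'a) set \<Rightarrow> ('a \<times> 'a) set \<Rightarrow> ('a \<times> 'a) set \<Rightarrow> 'a ppoint" where
  "mid L1 L2 l = (case (meet l L1, meet l L2) of
       (Fin p, Fin q) \<Rightarrow> Fin (pt_mid p q)
     | _ \<Rightarrow> Inf (dir l))"

definition crosses :: "('a::field \<times> 'a) set \<Rightarrow> ('a \<times> 'a) set \<Rightarrow> ('a \<times> 'a) set \<Rightarrow> bool" where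
  "crosses l L1 L2 \<longleftrightarrow> l \<noteq> L1 \<and> l \<noteq> L2 \<and> \<not> (parallel l L1 \<and> parallel l L2)"

definition quadrilateral ::
  "('a::field \<times> 'a) set \<Rightarrow> ('a \<times> 'a) set \<Rightarrow> ('a \<times> 'a) set \<Rightarrow> ('a \<times> 'a) set \<Rightarrow> bool" where
  "quadrilateral A B A' B' \<longleftrightarrow>
     is_line A \<and> is_line B \<and> is_line A' \<and> is_line B' \<and>
     distinct [A, B, A', B'] \<and>
     \<not> (\<exists>p. p \<in> A \<and> p \<in> B \<and> p \<in> A' \<and> p \<in> B') \<and>
     \<not> parallel A B \<and> \<not> parallel B A' \<and> \<not> parallel A' B' \<and> \<not> parallel B' A"

definition vertex :: "('a \<times> 'a) set \<Rightarrow> ('a \<times> 'a) set \<Rightarrow> ('a \<times> 'a)" where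
  "vertex L M = (THE p. p \<in> L \<and> p \<in> M)"

definition vertices ::
  "('a \<times> 'a) set \<Rightarrow> ('a \<times> 'a) set \<Rightarrow> ('a \<times> 'a) set \<Rightarrow> ('a \<times> 'a) set \<Rightarrow> ('a \<times> 'a) set" where
  "vertices A B A' B' = {vertex A B, vertex B A', vertex A' B', vertex B' A}"

definition centroid ::
  "('a::field \<times> 'a) set \<Rightarrow> ('a \<times> 'a) set \<Rightarrow> ('a \<times> 'a) set \<Rightarrow> ('a \<times> 'a) set \<Rightarrow> ('a \<times> 'a)" where
  "centroid A B A' B' = pt_mid (pt_mid (vertex A B) (vertex A' B')) (pt_mid (vertex B A') (vertex B' A))"

definition parallelogram ::
  "('a::field \<times> 'a) set \<Rightarrow> ('a \<times> 'a) set \<Rightarrow> ('a \<times> 'a) set \<Rightarrow> ('a \<times> 'a) set \<Rightarrow> bool" where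
  "parallelogram A B A' B' \<longleftrightarrow> quadrilateral A B A' B' \<and> parallel A A' \<and> parallel B B'"

definition bisects ::
  "('a::field \<times> 'a) set \<Rightarrow> ('a \<times> 'a) set \<Rightarrow> ('a \<times> 'a) set \<Rightarrow> ('a \<times> 'a) set \<Rightarrow> ('a \<times> 'a) set \<Rightarrow> bool" where
  "bisects l A B A' B' \<longleftrightarrow> is_line l \<and>
     (crosses l A A' \<and> crosses l B B' \<longrightarrow> mid A A' l = mid B B' l)"

definition bisector_midpoint ::
  "('a::field \<times> 'a) set \<Rightarrow> ('a \<times> 'a) set \<Rightarrow> ('a \<times> 'a) set \<Rightarrow> ('a \<times> 'a) set \<Rightarrow> ('a \<times> 'a) set \<Rightarrow> 'a ppoint \<Rightarrow> bool" where
  "bisector_midpoint l A B A' B' m \<longleftrightarrow> bisects l A B A' B' \<and>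
     ((crosses l A A' \<and> m = mid A A' l) \<or> (crosses l B B' \<and> m = mid B B' l))"

end

theory Submission
  imports Defs
begin

text \<open>
  Write the sides as lines \<open>a \<cdot> x = \<alpha>\<close>. If a line through \<open>p\<close> cuts \<open>a \<cdot> x = \<alpha>\<close> and
  \<open>a' \<cdot> x = \<alpha>'\<close> in two points with midpoint \<open>p\<close>, then the vector
  \<open>w = (\<alpha> - a \<cdot> p) a' + (\<alpha>' - a' \<cdot> p) a\<close> is normal to that line; the same holds
  trivially for lines through \<open>p\<close> that do not cross the pair. Two distinct bisectors with a common
  midpoint \<open>p\<close> thus force \<open>w = 0\<close>, which means that the point reflection at \<open>p\<close> either
  swaps the two lines or fixes both, i.e. \<open>p\<close> lies on both. Applied to both pairs of opposite
  sides, a case analysis shows that the four vertices form a parallelogram centred at \<open>p\<close>, and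
  \<open>p\<close> is their average. Conversely, a parallelogram is symmetric about its centre; the reflection
  permutes the vertices of \<open>Q\<close> without fixed points, so it maps each pair of opposite sides
  to itself, and then every line through the centre is a bisector with that midpoint.
\<close>

section \<open>Lines in coordinates\<close>

definition dot :: "'a::field \<times> 'a \<Rightarrow> 'a \<times> 'a \<Rightarrow> 'a" where
  "dot u v = fst u * fst v + snd u * snd v"

definition det2 :: "'a::field \<times> 'a \<Rightarrow> 'a \<times> 'a \<Rightarrow> 'a" where
  "det2 u v = fst u * snd v - snd u * fst v"

definition line :: "'a::field \<times> 'a \<Rightarrow> 'a \<Rightarrow> ('a \<times> 'a) set" where
  "line k d = {x. dot k x = d}"

lemma mem_line_iff: "x \<in> line k d \<longleftrightarrow> fst k * fst x + snd k * snd x = d"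
  by (simp add: line_def dot_def)

lemma pair_neq_0_iff: "(k::'a::zero \<times> 'a) \<noteq> (0, 0) \<longleftrightarrow> fst k \<noteq> 0 \<or> snd k \<noteq> 0"
  by (cases k) auto

lemma is_line_iff: "is_line L \<longleftrightarrow> (\<exists>k d. k \<noteq> (0, 0) \<and> L = line k d)"
proof -
  have "line (a, b) c = {(x, y). a * x + b * y = c}" for a b c :: 'a
    by (auto simp: mem_line_iff)
  then show ?thesis
    unfolding is_line_def by (metis prod.collapse)
qed

lemma is_lineE:
  assumes "is_line L"
  obtains k d where "k \<noteq> (0, 0)" "L = line k d"
  using assms is_line_iff by blast

lemma is_line_line: "k \<noteq> (0, 0) \<Longrightarrow> is_line (line k d)"
  using is_line_iff by blast

lemma line_scale: "c \<noteq> 0 \<Longrightarrow> line (c * fst k, c * snd k) (c * d) = line k d"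
  by (auto simp: mem_line_iff mult.assoc simp flip: distrib_left)

lemma det2_eq_0_iff_proportional:
  assumes "k \<noteq> (0, 0)"
  shows "det2 k k' = 0 \<longleftrightarrow> (\<exists>c. k' = (c * fst k, c * snd k))"
proof
  assume det: "det2 k k' = 0"
  show "\<exists>c. k' = (c * fst k, c * snd k)"
  proof (cases "fst k = 0")
    case True
    with assms have "snd k \<noteq> 0" by (simp add: pair_neq_0_iff)
    with True det show ?thesis
      by (intro exI[of _ "snd k' / snd k"]) (auto simp: det2_def prod_eq_iff)
  next
    case False
    with det show ?thesis
      by (intro exI[of _ "fst k' / fst k"]) (auto simp: det2_def prod_eq_iff field_simps)
  qed
qed (auto simp: det2_def)

lemma parallel_refl: "parallel L L"
  by (simp add: parallel_def)

lemma parallel_commute: "parallel L M \<longleftrightarrow> parallel M L"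
  by (auto simp: parallel_def)

lemma not_parallel_if_common_point: "L \<noteq> M \<Longrightarrow> x \<in> L \<Longrightarrow> x \<in> M \<Longrightarrow> \<not> parallel L M"
  by (auto simp: parallel_def)

lemma parallel_same_normal: "parallel (line k d) (line k e)"
  by (cases "d = e") (auto simp: parallel_def line_def)

lemma line_intersection_exists:
  assumes det: "det2 k k' \<noteq> 0"
  shows "\<exists>x. x \<in> line k d \<and> x \<in> line k' d'"
proof
  let ?x = "((d * snd k' - d' * snd k) / det2 k k', (fst k * d' - fst k' * d) / det2 k k')"
  have "fst k * fst ?x + snd k * snd ?x = d * det2 k k' / det2 k k'"
    "fst k' * fst ?x + snd k' * snd ?x = d' * det2 k k' / det2 k k'"
    by (simp_all add: det2_def algebra_simps add_divide_distrib diff_divide_distrib)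
  with det show "?x \<in> line k d \<and> ?x \<in> line k' d'"
    by (simp add: mem_line_iff)
qed

lemma parallel_line_iff:
  assumes k: "k \<noteq> (0, 0)" and k': "k' \<noteq> (0, 0)"
  shows "parallel (line k d) (line k' d') \<longleftrightarrow> det2 k k' = 0"
proof
  assume "det2 k k' = 0"
  then obtain c where c: "k' = (c * fst k, c * snd k)"
    using det2_eq_0_iff_proportional k by blast
  with k' have "c \<noteq> 0" by auto
  then have "line k' d' = line k (d' / c)"
    using c line_scale[of c k "d' / c"] by simp
  then show "parallel (line k d) (line k' d')"
    by (simp add: parallel_same_normal)
next
  assume par: "parallel (line k d) (line k' d')"
  show "det2 k k' = 0"
  proof (rule ccontr)
    assume det: "det2 k k' \<noteq> 0"
    then obtain x where x: "x \<in> line k d" "x \<in> line k' d'"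
      using line_intersection_exists by blast
    with par have eq: "line k d = line k' d'"
      by (auto simp: parallel_def)
    have "(fst x - snd k, snd x + fst k) \<in> line k d"
      using x by (auto simp: mem_line_iff algebra_simps)
    moreover have "(fst x - snd k, snd x + fst k) \<notin> line k' d'"
      using x det by (auto simp: mem_line_iff det2_def algebra_simps)
    ultimately show False
      using eq by blast
  qed
qed

lemma parallel_trans:
  assumes "is_line L" "is_line M" "is_line N" "parallel L M" "parallel M N"
  shows "parallel L N"
proof -
  obtain k d where k: "k \<noteq> (0, 0)" "L = line k d" using assms(1) by (rule is_lineE)
  obtain m e where m: "m \<noteq> (0, 0)" "M = line m e" using assms(2) by (rule is_lineE)
  obtain n f where n: "n \<noteq> (0, 0)" "N = line n f" using assms(3) by (rule is_lineE)
  have "det2 k m = 0" "det2 m n = 0"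
    using assms(4,5) k m n parallel_line_iff by blast+
  moreover have "fst m * det2 k n = fst k * det2 m n + fst n * det2 k m"
    "snd m * det2 k n = snd k * det2 m n + snd n * det2 k m"
    by (simp_all add: det2_def algebra_simps)
  ultimately have "det2 k n = 0"
    using m(1) by (auto simp: pair_neq_0_iff)
  then show ?thesis
    using parallel_line_iff k n by blast
qed

lemma line_eq_if_two_common_points:
  assumes "is_line L" "is_line M" "x \<noteq> y" "x \<in> L" "y \<in> L" "x \<in> M" "y \<in> M"
  shows "L = M"
proof -
  obtain k d where k: "k \<noteq> (0, 0)" "L = line k d" using assms(1) by (rule is_lineE)
  obtain k' d' where k': "k' \<noteq> (0, 0)" "M = line k' d'" using assms(2) by (rule is_lineE)
  define u where "u = (fst y - fst x, snd y - snd x)"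
  have u: "fst u \<noteq> 0 \<or> snd u \<noteq> 0"
    using assms(3) by (auto simp: u_def prod_eq_iff)
  have "dot k u = 0" "dot k' u = 0"
    using assms k k' by (simp_all add: u_def mem_line_iff dot_def algebra_simps)
  moreover have "fst u * det2 k k' = snd k' * dot k u - snd k * dot k' u"
    "snd u * det2 k k' = fst k * dot k' u - fst k' * dot k u"
    by (simp_all add: dot_def det2_def algebra_simps)
  ultimately have "det2 k k' = 0"
    using u by auto
  then have "parallel L M"
    using parallel_line_iff k k' by blast
  with assms(4,6) show ?thesis
    by (auto simp: parallel_def)
qed

lemma line_through_two_points:
  assumes "x \<noteq> y"
  obtains L where "is_line L" "x \<in> L" "y \<in> L"
proof
  let ?k = "(snd y - snd x, fst x - fst y)"
  show "is_line (line ?k (dot ?k x))"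
    using assms by (intro is_line_line) (auto simp: prod_eq_iff)
  show "x \<in> line ?k (dot ?k x)" "y \<in> line ?k (dot ?k x)"
    by (simp_all add: line_def dot_def algebra_simps)
qed

lemma two_lines_through_point:
  obtains l1 l2 :: "('a::field \<times> 'a) set"
  where "is_line l1" "is_line l2" "l1 \<noteq> l2" "p \<in> l1" "p \<in> l2"
proof
  show "is_line (line (1, 0) (fst p))" "is_line (line (0, 1) (snd p))"
    by (simp_all add: is_line_line)
  show "p \<in> line (1, 0) (fst p)" "p \<in> line (0, 1) (snd p)"
    by (simp_all add: mem_line_iff)
  have "(fst p, snd p + 1) \<in> line (1, 0) (fst p)" "(fst p, snd p + 1) \<notin> line (0, 1) (snd p)"
    by (simp_all add: mem_line_iff)
  then show "line (1, 0) (fst p) \<noteq> line (0, 1) (snd p)"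
    by blast
qed

section \<open>Intersection points and midpoints of chords\<close>

lemma vertex_eq:
  assumes "is_line L" "is_line M" "L \<noteq> M" "x \<in> L" "x \<in> M"
  shows "vertex L M = x"
  unfolding vertex_def
  using line_eq_if_two_common_points[OF assms(1,2)] assms(3-5) by (intro the_equality) blast+

lemma vertex_in:
  assumes "is_line L" "is_line M" "\<not> parallel L M"
  shows "vertex L M \<in> L" "vertex L M \<in> M"
proof -
  obtain x where "x \<in> L" "x \<in> M"
    using assms(3) by (auto simp: parallel_def)
  moreover have "L \<noteq> M"
    using assms(3) by (auto simp: parallel_def)
  ultimately show "vertex L M \<in> L" "vertex L M \<in> M"
    using vertex_eq[OF assms(1,2)] by auto
qed

lemma vertex_commute: "vertex L M = vertex M L"
  by (simp add: vertex_def conj_commute)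

lemma meet_eq_Fin:
  assumes "is_line l" "is_line L" "l \<noteq> L" "x \<in> l" "x \<in> L"
  shows "meet l L = Fin x"
proof -
  have "l \<inter> L \<noteq> {}"
    using assms(4,5) by blast
  then show ?thesis
    using vertex_eq[OF assms] by (simp add: meet_def vertex_def)
qed

lemma meet_eq_Inf: "parallel l L \<Longrightarrow> l \<noteq> L \<Longrightarrow> meet l L = Inf (dir l)"
  by (simp add: meet_def parallel_def)

lemma mid_commute: "mid L L' l = mid L' L l"
  by (simp add: mid_def pt_mid_def add.commute split: ppoint.split)

lemma mid_eq_Fin:
  assumes "is_line l" "is_line L" "is_line L'" "l \<noteq> L" "l \<noteq> L'"
    "x \<in> l" "x \<in> L" "x' \<in> l" "x' \<in> L'"
  shows "mid L L' l = Fin (pt_mid x x')"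
  using meet_eq_Fin[OF assms(1,2,4,6,7)] meet_eq_Fin[OF assms(1,3,5,8,9)] by (simp add: mid_def)

lemma mid_eq_Inf: "parallel l L \<Longrightarrow> l \<noteq> L \<Longrightarrow> mid L L' l = Inf (dir l)"
  by (simp add: mid_def meet_eq_Inf)

lemma mid_eq_FinD:
  assumes "is_line l" "is_line L" "is_line L'" "l \<noteq> L" "l \<noteq> L'" "mid L L' l = Fin p"
  obtains x x' where "x \<in> l" "x \<in> L" "x' \<in> l" "x' \<in> L'" "p = pt_mid x x'"
proof -
  have "\<not> parallel l L"
    using assms(4,6) mid_eq_Inf by fastforce
  moreover have "\<not> parallel l L'"
    using assms(5,6) mid_eq_Inf[of l L' L] by (fastforce simp: mid_commute)
  ultimately obtain x x' where x: "x \<in> l" "x \<in> L" and x': "x' \<in> l" "x' \<in> L'"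
    by (auto simp: parallel_def)
  have "p = pt_mid x x'"
    using assms(6) mid_eq_Fin[OF assms(1-5) x x'] by simp
  with x x' show ?thesis
    by (rule that)
qed

lemma double_half: "(2::'a::field) \<noteq> 0 \<Longrightarrow> 2 * (z / 2) = (z::'a)"
  by simp

lemma dot_pt_mid:
  assumes "(2::'a::field) \<noteq> 0"
  shows "2 * dot k (pt_mid x y) = dot k x + dot (k::'a \<times> 'a) y"
proof -
  have "2 * fst (pt_mid x y) = fst x + fst y" "2 * snd (pt_mid x y) = snd x + snd y"
    by (simp_all only: pt_mid_def fst_conv snd_conv double_half[OF assms])
  then show ?thesis
    by (simp add: dot_def algebra_simps flip: mult.assoc)
qed

lemma pt_mid_same: "(2::'a::field) \<noteq> 0 \<Longrightarrow> pt_mid x x = (x::'a \<times> 'a)"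
  by (simp add: pt_mid_def prod_eq_iff)

lemma pt_mid_commute: "pt_mid x y = pt_mid y x"
  by (simp add: pt_mid_def add.commute)

lemma pt_mid_in_line:
  assumes two: "(2::'a::field) \<noteq> 0" and "is_line L" "x \<in> L" "y \<in> L"
  shows "pt_mid x (y::'a \<times> 'a) \<in> L"
proof -
  obtain k d where k: "L = line k d" using assms(2) by (rule is_lineE)
  with assms have "2 * dot k (pt_mid x y) = 2 * d"
    using dot_pt_mid[OF two] by (simp add: line_def)
  with two k show ?thesis
    by (simp add: line_def)
qed

section \<open>Point reflections\<close>

definition point_reflect :: "'a::field \<times> 'a \<Rightarrow> 'a \<times> 'a \<Rightarrow> 'a \<times> 'a" where
  "point_reflect p x = (2 * fst p - fst x, 2 * snd p - snd x)"

lemma point_reflect_point_reflect [simp]: "point_reflect p (point_reflect p x) = x"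
  by (simp add: point_reflect_def)

lemma inj_point_reflect: "inj (point_reflect p)"
  by (metis injI point_reflect_point_reflect)

lemma point_reflect_image_image [simp]: "point_reflect p ` point_reflect p ` L = L"
  by (simp add: image_comp comp_def)

lemma point_reflect_in_image_iff [simp]: "point_reflect p x \<in> point_reflect p ` L \<longleftrightarrow> x \<in> L"
  by (simp add: inj_image_mem_iff inj_point_reflect)

lemma point_reflect_center [simp]: "point_reflect p p = p"
  by (simp add: point_reflect_def prod_eq_iff)

lemma pt_mid_point_reflect: "(2::'a::field) \<noteq> 0 \<Longrightarrow> pt_mid x (point_reflect p x) = (p::'a \<times> 'a)"
  by (simp add: pt_mid_def point_reflect_def)

lemma point_reflect_pt_mid: "(2::'a::field) \<noteq> 0 \<Longrightarrow> point_reflect (pt_mid x y) x = (y::'a \<times> 'a)"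
  by (simp add: pt_mid_def point_reflect_def prod_eq_iff field_simps)

lemma pt_mid_point_reflect_point_reflect:
  "(2::'a::field) \<noteq> 0 \<Longrightarrow>
    pt_mid (point_reflect p x) (point_reflect p y) = point_reflect p (pt_mid x (y::'a \<times> 'a))"
  by (simp add: pt_mid_def point_reflect_def prod_eq_iff field_simps)

lemma point_reflect_line: "point_reflect p ` line k d = line k (2 * dot k p - d)"
proof -
  have dot: "dot k (point_reflect p x) = 2 * dot k p - dot k x" for x
    by (simp add: dot_def point_reflect_def algebra_simps)
  show ?thesis
  proof (intro equalityI subsetI)
    fix y assume "y \<in> line k (2 * dot k p - d)"
    then have "point_reflect p y \<in> line k d"
      by (simp add: line_def dot)
    then show "y \<in> point_reflect p ` line k d"
      by (metis image_eqI point_reflect_point_reflect)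
  qed (auto simp: line_def dot)
qed

lemma point_reflect_is_line:
  assumes "is_line L"
  shows "is_line (point_reflect p ` L)" "parallel L (point_reflect p ` L)"
proof -
  obtain k d where "k \<noteq> (0, 0)" "L = line k d" using assms by (rule is_lineE)
  then show "is_line (point_reflect p ` L)" "parallel L (point_reflect p ` L)"
    by (simp_all add: point_reflect_line is_line_line parallel_same_normal)
qed

lemma point_reflect_line_through:
  assumes "is_line L" "p \<in> L"
  shows "point_reflect p ` L = L"
proof -
  obtain k d where L: "L = line k d" using assms(1) by (rule is_lineE)
  with assms(2) have "dot k p = d"
    by (simp add: line_def)
  with L show ?thesis
    by (simp add: point_reflect_line)
qed

lemma point_reflect_line_eq:
  assumes "is_line L" "is_line M" "x \<noteq> y" "x \<in> L" "y \<in> L"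
    "point_reflect p x \<in> M" "point_reflect p y \<in> M"
  shows "point_reflect p ` L = M"
proof (rule line_eq_if_two_common_points)
  show "point_reflect p x \<noteq> point_reflect p y"
    using assms(3) by (metis point_reflect_point_reflect)
qed (use assms point_reflect_is_line(1)[OF assms(1)] in auto)

lemma point_reflect_eq_if_parallel:
  assumes "is_line L" "is_line M" "parallel L M" "x \<in> L" "point_reflect p x \<in> M"
  shows "point_reflect p ` L = M"
proof -
  have "parallel (point_reflect p ` L) M"
    using parallel_trans[OF point_reflect_is_line(1)[OF assms(1)] assms(1,2)]
      point_reflect_is_line(2)[OF assms(1)] assms(3) by (simp add: parallel_commute)
  with assms(4,5) show ?thesis
    by (auto simp: parallel_def)
qed

lemma center_in_line:
  assumes "(2::'a::field) \<noteq> 0" "is_line L" "x \<in> L" "point_reflect p x \<in> L"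
  shows "(p::'a \<times> 'a) \<in> L"
  using pt_mid_in_line[OF assms] pt_mid_point_reflect[OF assms(1)] by simp

lemma point_reflect_vertex:
  assumes "is_line L" "is_line M" "\<not> parallel L M"
  shows "point_reflect p (vertex L M) = vertex (point_reflect p ` L) (point_reflect p ` M)"
proof (rule vertex_eq[symmetric])
  show "point_reflect p ` L \<noteq> point_reflect p ` M"
    using assms(3) inj_point_reflect by (metis inj_image_eq_iff parallel_refl)
qed (use assms point_reflect_is_line(1)[OF assms(1)] point_reflect_is_line(1)[OF assms(2)]
       vertex_in[OF assms] in auto)

section \<open>Pairs of lines symmetric about a point\<close>

text \<open>A line is mapped to itself by the reflection at \<open>p\<close> iff it passes through \<open>p\<close>, so
  this says that the reflection maps the pair \<open>{L, L'}\<close> to itself.\<close>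

definition symmetric_pair :: "'a::field \<times> 'a \<Rightarrow> ('a \<times> 'a) set \<Rightarrow> ('a \<times> 'a) set \<Rightarrow> bool" where
  "symmetric_pair p L L' \<longleftrightarrow> point_reflect p ` L = L' \<or> (p \<in> L \<and> p \<in> L')"

lemma mid_symmetric_pair:
  assumes two: "(2::'a::field) \<noteq> 0" and L: "is_line L" and L': "is_line L'" and l: "is_line l"
    and sym: "symmetric_pair (p::'a \<times> 'a) L L'" and p: "p \<in> l" and cr: "crosses l L L'"
  shows "mid L L' l = Fin p"
proof -
  have ne: "l \<noteq> L" "l \<noteq> L'"
    using cr by (auto simp: crosses_def)
  from sym consider "point_reflect p ` L = L'" | "p \<in> L" "p \<in> L'"
    by (auto simp: symmetric_pair_def)
  then show ?thesis
  proof cases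
    case 1
    have "\<not> parallel l L"
    proof
      assume "parallel l L"
      moreover have "parallel L L'"
        using point_reflect_is_line(2)[OF L, of p] unfolding 1 .
      ultimately have "parallel l L'"
        using parallel_trans[OF l L L'] by blast
      with \<open>parallel l L\<close> cr show False
        by (simp add: crosses_def)
    qed
    then obtain x where x: "x \<in> l" "x \<in> L"
      by (auto simp: parallel_def)
    have "point_reflect p x \<in> l"
      using x(1) point_reflect_line_through[OF l p] by blast
    moreover have "point_reflect p x \<in> L'"
      using x(2) 1 by blast
    ultimately show ?thesis
      using mid_eq_Fin[OF l L L' ne x] pt_mid_point_reflect[OF two] by simp
  next
    case 2
    then show ?thesis
      using mid_eq_Fin[OF l L L' ne p _ p] pt_mid_same[OF two] by simp
  qed
qed

text \<open>If \<open>p\<close> is the midpoint of \<open>x \<in> line a \<alpha>\<close> and \<open>x' \<in> line a' \<alpha>'\<close>, this vector equals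
  \<open>((a \<cdot> u) a' - (a' \<cdot> u) a) / 2\<close> with \<open>u = x - x'\<close>, which is orthogonal to \<open>u\<close>.\<close>

definition chord_normal :: "'a::field \<times> 'a \<Rightarrow> 'a \<Rightarrow> 'a \<times> 'a \<Rightarrow> 'a \<Rightarrow> 'a \<times> 'a \<Rightarrow> 'a \<times> 'a" where
  "chord_normal a \<alpha> a' \<alpha>' p =
     ((\<alpha> - dot a p) * fst a' + (\<alpha>' - dot a' p) * fst a,
      (\<alpha> - dot a p) * snd a' + (\<alpha>' - dot a' p) * snd a)"

lemma det2_chord_normal:
  "det2 n (chord_normal a \<alpha> a' \<alpha>' p) = (\<alpha> - dot a p) * det2 n a' + (\<alpha>' - dot a' p) * det2 n a"
  by (simp add: chord_normal_def det2_def algebra_simps)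

lemma det2_chord_normal_pt_mid_eq_0:
  assumes two: "(2::'a::field) \<noteq> 0"
    and x: "x \<in> line n g" "x \<in> line a \<alpha>" and x': "x' \<in> line n g" "x' \<in> line a' \<alpha>'"
  shows "det2 n (chord_normal a \<alpha> a' \<alpha>' (pt_mid x (x'::'a \<times> 'a))) = 0"
proof -
  let ?p = "pt_mid x x'"
  have "2 * det2 n (chord_normal a \<alpha> a' \<alpha>' ?p) =
      (2 * \<alpha> - 2 * dot a ?p) * det2 n a' + (2 * \<alpha>' - 2 * dot a' ?p) * det2 n a"
    by (simp add: det2_chord_normal algebra_simps)
  also have "\<dots> = (dot a x - dot a x') * det2 n a' + (dot a' x' - dot a' x) * det2 n a"
    using x(2) x'(2) by (simp add: dot_pt_mid[OF two] line_def)
  also have "\<dots> = det2 a a' * (dot n x - dot n x')"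
    by (simp add: dot_def det2_def algebra_simps)
  also have "\<dots> = 0"
    using x(1) x'(1) by (simp add: line_def)
  finally show ?thesis
    using two by simp
qed

lemma det2_chord_normal_eq_0:
  assumes two: "(2::'a::field) \<noteq> 0" and a: "a \<noteq> (0, 0)" and a': "a' \<noteq> (0, 0)" and n: "n \<noteq> (0, 0)"
    and p: "p \<in> line n g"
    and mid: "crosses (line n g) (line a \<alpha>) (line a' \<alpha>') \<Longrightarrow>
      mid (line a \<alpha>) (line a' \<alpha>') (line n g) = Fin p"
  shows "det2 n (chord_normal a \<alpha> a' \<alpha>' (p::'a \<times> 'a)) = 0"
proof (cases "crosses (line n g) (line a \<alpha>) (line a' \<alpha>')")
  case True
  then have ne: "line n g \<noteq> line a \<alpha>" "line n g \<noteq> line a' \<alpha>'"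
    by (auto simp: crosses_def)
  obtain x x' where x: "x \<in> line n g" "x \<in> line a \<alpha>"
    and x': "x' \<in> line n g" "x' \<in> line a' \<alpha>'" and p_eq: "p = pt_mid x x'"
    by (rule mid_eq_FinD[OF is_line_line[OF n] is_line_line[OF a] is_line_line[OF a'] ne mid[OF True]])
  then show ?thesis
    using det2_chord_normal_pt_mid_eq_0[OF two x x'] by simp
next
  case False
  have par_iff: "parallel (line n g) (line k d) \<longleftrightarrow> det2 n k = 0" if "k \<noteq> (0, 0)" for k d
    using parallel_line_iff[OF n that] .
  from False consider "line n g = line a \<alpha>" | "line n g = line a' \<alpha>'"
    | "parallel (line n g) (line a \<alpha>)" "parallel (line n g) (line a' \<alpha>')"
    by (auto simp: crosses_def)
  then show ?thesis
  proof cases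
    case 1
    with p have "p \<in> line a \<alpha>"
      by simp
    then have "\<alpha> = dot a p"
      by (simp add: line_def)
    moreover have "det2 n a = 0"
      using par_iff[OF a] parallel_refl 1 by metis
    ultimately show ?thesis
      by (simp add: det2_chord_normal)
  next
    case 2
    with p have "p \<in> line a' \<alpha>'"
      by simp
    then have "\<alpha>' = dot a' p"
      by (simp add: line_def)
    moreover have "det2 n a' = 0"
      using par_iff[OF a'] parallel_refl 2 by metis
    ultimately show ?thesis
      by (simp add: det2_chord_normal)
  next
    case 3
    then show ?thesis
      using par_iff a a' by (simp add: det2_chord_normal)
  qed
qed

lemma eq_0_if_det2_eq_0_with_independent:
  assumes "det2 n w = 0" "det2 n' w = 0" "det2 n n' \<noteq> 0"
  shows "w = (0, 0)"
proof -
  have "det2 n n' * fst w = fst n' * det2 n w - fst n * det2 n' w"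
    "det2 n n' * snd w = snd n' * det2 n w - snd n * det2 n' w"
    by (simp_all add: det2_def algebra_simps)
  with assms show ?thesis
    by (simp add: prod_eq_iff)
qed

lemma symmetric_pair_if_chord_normal_eq_0:
  assumes a: "a \<noteq> (0, 0)" and a': "a' \<noteq> (0, 0)" and w: "chord_normal a \<alpha> a' \<alpha>' p = (0, 0)"
  shows "symmetric_pair p (line a \<alpha>) (line a' \<alpha>')"
proof (cases "\<alpha> = dot a p")
  case True
  with w have "(\<alpha>' - dot a' p) * fst a = 0" "(\<alpha>' - dot a' p) * snd a = 0"
    by (simp_all add: chord_normal_def prod_eq_iff)
  with a have "\<alpha>' = dot a' p"
    by (auto simp: pair_neq_0_iff)
  with True show ?thesis
    by (simp add: symmetric_pair_def line_def)
next
  case False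
  define c where "c = (dot a' p - \<alpha>') / (\<alpha> - dot a p)"
  have c_mult: "c * (\<alpha> - dot a p) = dot a' p - \<alpha>'"
    using False by (simp add: c_def)
  from w have "(\<alpha> - dot a p) * fst a' = (dot a' p - \<alpha>') * fst a"
    "(\<alpha> - dot a p) * snd a' = (dot a' p - \<alpha>') * snd a"
    by (simp_all add: chord_normal_def prod_eq_iff add_eq_0_iff2 algebra_simps)
  with False have a'_eq: "a' = (c * fst a, c * snd a)"
    by (simp add: c_def prod_eq_iff field_simps)
  with a' have "c \<noteq> 0"
    by auto
  have "dot a' p = c * dot a p"
    using a'_eq by (simp add: dot_def algebra_simps)
  with c_mult have "\<alpha>' = c * (2 * dot a p - \<alpha>)"
    by (simp add: algebra_simps)
  with a'_eq have "line a' \<alpha>' = line a (2 * dot a p - \<alpha>)"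
    using line_scale[OF \<open>c \<noteq> 0\<close>] by simp
  then show ?thesis
    by (simp add: symmetric_pair_def point_reflect_line)
qed

lemma symmetric_pair_if_two_chord_midpoints:
  assumes two: "(2::'a::field) \<noteq> 0" and L: "is_line L" and L': "is_line L'"
    and l1: "is_line l1" and l2: "is_line l2" and ne: "l1 \<noteq> l2"
    and p: "(p::'a \<times> 'a) \<in> l1" "p \<in> l2"
    and mid1: "crosses l1 L L' \<Longrightarrow> mid L L' l1 = Fin p"
    and mid2: "crosses l2 L L' \<Longrightarrow> mid L L' l2 = Fin p"
  shows "symmetric_pair p L L'"
proof -
  obtain a \<alpha> where a: "a \<noteq> (0, 0)" "L = line a \<alpha>" using L by (rule is_lineE)
  obtain a' \<alpha>' where a': "a' \<noteq> (0, 0)" "L' = line a' \<alpha>'" using L' by (rule is_lineE)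
  obtain n g where n: "n \<noteq> (0, 0)" "l1 = line n g" using l1 by (rule is_lineE)
  obtain n' g' where n': "n' \<noteq> (0, 0)" "l2 = line n' g'" using l2 by (rule is_lineE)
  have "\<not> parallel l1 l2"
    using not_parallel_if_common_point[OF ne p] .
  then have "det2 n n' \<noteq> 0"
    using parallel_line_iff n n' by blast
  moreover have "det2 n (chord_normal a \<alpha> a' \<alpha>' p) = 0"
    using det2_chord_normal_eq_0[OF two a(1) a'(1) n(1)] p(1) mid1 a a' n by blast
  moreover have "det2 n' (chord_normal a \<alpha> a' \<alpha>' p) = 0"
    using det2_chord_normal_eq_0[OF two a(1) a'(1) n'(1)] p(2) mid2 a a' n' by blast
  ultimately have "chord_normal a \<alpha> a' \<alpha>' p = (0, 0)"
    using eq_0_if_det2_eq_0_with_independent by blast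
  then show ?thesis
    using symmetric_pair_if_chord_normal_eq_0[OF a(1) a'(1)] a a' by simp
qed

section \<open>Bisectors of a quadrilateral\<close>

lemma quadrilateralD:
  assumes "quadrilateral A B A' B'"
  shows quadrilateral_is_line: "is_line A" "is_line B" "is_line A'" "is_line B'"
    and quadrilateral_not_parallel:
      "\<not> parallel A B" "\<not> parallel B A'" "\<not> parallel A' B'" "\<not> parallel B' A"
      "\<not> parallel B A" "\<not> parallel A' B" "\<not> parallel B' A'" "\<not> parallel A B'"
  using assms by (auto simp: quadrilateral_def parallel_commute)

lemma quadrilateral_vertex_in:
  assumes "quadrilateral A B A' B'"
  shows "vertex A B \<in> A" "vertex A B \<in> B" "vertex B A' \<in> B" "vertex B A' \<in> A'"
    "vertex A' B' \<in> A'" "vertex A' B' \<in> B'" "vertex B' A \<in> B'" "vertex B' A \<in> A"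
proof -
  note lines = quadrilateral_is_line[OF assms] and np = quadrilateral_not_parallel[OF assms]
  show "vertex A B \<in> A" "vertex A B \<in> B" "vertex B A' \<in> B" "vertex B A' \<in> A'"
    "vertex A' B' \<in> A'" "vertex A' B' \<in> B'" "vertex B' A \<in> B'" "vertex B' A \<in> A"
    using vertex_in[OF lines(1,2) np(1)] vertex_in[OF lines(2,3) np(2)]
      vertex_in[OF lines(3,4) np(3)] vertex_in[OF lines(4,1) np(4)] by simp_all
qed

lemma quadrilateral_rotate: "quadrilateral A B A' B' \<Longrightarrow> quadrilateral B A' B' A"
  by (auto simp: quadrilateral_def)

lemma vertices_rotate: "vertices B A' B' A = vertices A B A' B'"
  by (auto simp: vertices_def)

lemma centroid_rotate: "centroid B A' B' A = centroid A B A' B'"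
  unfolding centroid_def by (metis pt_mid_commute)

lemma crosses_some_pair:
  assumes Q: "quadrilateral A B A' B'" and l: "is_line l"
  shows "crosses l A A' \<or> crosses l B B'"
proof (rule ccontr)
  note lines = quadrilateral_is_line[OF Q] and np = quadrilateral_not_parallel[OF Q]
  assume "\<not> ?thesis"
  then have "parallel l A \<or> parallel l A'" "parallel l B \<or> parallel l B'"
    by (auto simp: crosses_def parallel_refl)
  then show False
    using parallel_trans[OF lines(1) l lines(2)] parallel_trans[OF lines(1) l lines(4)]
      parallel_trans[OF lines(3) l lines(2)] parallel_trans[OF lines(3) l lines(4)]
      np(1,3,6,8) parallel_commute by metis
qed

lemma mid_Fin_if_bisects:
  assumes two: "(2::'a::field) \<noteq> 0" and l: "is_line l"
    and L: "is_line L" and L': "is_line L'" and M: "is_line M" and M': "is_line M'"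
    and np: "\<not> parallel L M" "\<not> parallel L M'" "\<not> parallel L' M" "\<not> parallel L' M'"
    and cr: "crosses l L L'" and bis: "crosses l M M' \<Longrightarrow> mid L L' l = mid M M' l"
  obtains p :: "'a::field \<times> 'a" where "mid L L' l = Fin p" "p \<in> l"
proof -
  have ne: "l \<noteq> L" "l \<noteq> L'"
    using cr by (auto simp: crosses_def)
  have not_par: "\<not> parallel l N" if N: "N \<in> {L, L'}" for N
  proof
    assume par: "parallel l N"
    have "\<not> parallel l K" if K: "K \<in> {M, M'}" for K
    proof
      assume "parallel l K"
      with par have "parallel N K"
        using parallel_trans[of N l K] N K L L' M M' l by (auto simp: parallel_commute)
      with np N K show False
        by auto
    qed
    then have "\<not> parallel l M" "\<not> parallel l M'"
      by auto
    then have ne_M: "l \<noteq> M" "l \<noteq> M'" and "crosses l M M'"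
      using parallel_refl by (auto simp: crosses_def)
    from \<open>\<not> parallel l M\<close> \<open>\<not> parallel l M'\<close>
    obtain y y' where y: "y \<in> l" "y \<in> M" and y': "y' \<in> l" "y' \<in> M'"
      by (auto simp: parallel_def)
    have "mid L L' l = Fin (pt_mid y y')"
      using bis[OF \<open>crosses l M M'\<close>] mid_eq_Fin[OF l M M' ne_M y y'] by simp
    moreover have "mid L L' l = Inf (dir l)"
      using N par ne mid_eq_Inf[of l L L'] mid_eq_Inf[of l L' L] by (auto simp: mid_commute)
    ultimately show False
      by simp
  qed
  then have "l \<inter> L \<noteq> {}" "l \<inter> L' \<noteq> {}"
    unfolding parallel_def by blast+
  then obtain x x' where x: "x \<in> l" "x \<in> L" and x': "x' \<in> l" "x' \<in> L'"
    by blast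
  then show ?thesis
    using that mid_eq_Fin[OF l L L' ne x x'] pt_mid_in_line[OF two l x(1) x'(1)] by blast
qed

lemma bisector_midpointE:
  assumes two: "(2::'a::field) \<noteq> 0" and Q: "quadrilateral A B A' B'"
    and bm: "bisector_midpoint l A B A' B' m"
  obtains p :: "'a::field \<times> 'a" where "m = Fin p" "p \<in> l"
    "crosses l A A' \<Longrightarrow> mid A A' l = Fin p" "crosses l B B' \<Longrightarrow> mid B B' l = Fin p"
proof -
  note lines = quadrilateral_is_line[OF Q] and np = quadrilateral_not_parallel[OF Q]
  have l: "is_line l" and bis: "crosses l A A' \<Longrightarrow> crosses l B B' \<Longrightarrow> mid A A' l = mid B B' l"
    using bm by (simp_all add: bisector_midpoint_def bisects_def)
  from bm consider "crosses l A A'" "m = mid A A' l" | "crosses l B B'" "m = mid B B' l"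
    by (auto simp: bisector_midpoint_def)
  then obtain p where "m = Fin p" "p \<in> l"
  proof cases
    case 1
    obtain p where "mid A A' l = Fin p" "p \<in> l"
      by (rule mid_Fin_if_bisects[OF two l lines(1,3,2,4) np(1,8,6,3) 1(1) bis[OF 1(1)]])
    with 1(2) that show ?thesis
      by simp
  next
    case 2
    have bis': "crosses l A A' \<Longrightarrow> mid B B' l = mid A A' l"
      using bis 2(1) by simp
    obtain p where "mid B B' l = Fin p" "p \<in> l"
      by (rule mid_Fin_if_bisects[OF two l lines(2,4,1,3) np(5,2,4,7) 2(1) bis'])
    with 2(2) that show ?thesis
      by simp
  qed
  moreover have "crosses l A A' \<Longrightarrow> mid A A' l = m" "crosses l B B' \<Longrightarrow> mid B B' l = m"
    using bm bis by (auto simp: bisector_midpoint_def)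
  ultimately show ?thesis
    using that by simp
qed

lemma symmetric_pairs_if_common_bisector_midpoint:
  assumes two: "(2::'a::field) \<noteq> 0" and Q: "quadrilateral A B A' B'" and ne: "l1 \<noteq> l2"
    and bm1: "bisector_midpoint l1 A B A' B' m" and bm2: "bisector_midpoint l2 A B A' B' m"
  obtains p :: "'a::field \<times> 'a" where "m = Fin p" "symmetric_pair p A A'" "symmetric_pair p B B'"
proof -
  note lines = quadrilateral_is_line[OF Q]
  have l1: "is_line l1" and l2: "is_line l2"
    using bm1 bm2 by (simp_all add: bisector_midpoint_def bisects_def)
  obtain p where p1: "m = Fin p" "p \<in> l1"
    "crosses l1 A A' \<Longrightarrow> mid A A' l1 = Fin p" "crosses l1 B B' \<Longrightarrow> mid B B' l1 = Fin p"
    using bisector_midpointE[OF two Q bm1] by blast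
  obtain p2 where p2: "m = Fin p2" "p2 \<in> l2"
    "crosses l2 A A' \<Longrightarrow> mid A A' l2 = Fin p2" "crosses l2 B B' \<Longrightarrow> mid B B' l2 = Fin p2"
    using bisector_midpointE[OF two Q bm2] by blast
  from p1(1) p2(1) have "p2 = p"
    by simp
  with p1 p2 have "symmetric_pair p A A'" "symmetric_pair p B B'"
    using symmetric_pair_if_two_chord_midpoints[OF two _ _ l1 l2 ne] lines by simp_all
  with p1(1) show ?thesis
    by (rule that)
qed

lemma bisector_midpoint_if_symmetric_pairs:
  assumes two: "(2::'a::field) \<noteq> 0" and Q: "quadrilateral A B A' B'"
    and A: "symmetric_pair p A A'" and B: "symmetric_pair (p::'a \<times> 'a) B B'"
    and l: "is_line l" and p: "p \<in> l"
  shows "bisector_midpoint l A B A' B' (Fin p)"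
proof -
  note lines = quadrilateral_is_line[OF Q]
  have "crosses l A A' \<Longrightarrow> mid A A' l = Fin p" "crosses l B B' \<Longrightarrow> mid B B' l = Fin p"
    using mid_symmetric_pair[OF two lines(1,3) l A p] mid_symmetric_pair[OF two lines(2,4) l B p] by simp_all
  with crosses_some_pair[OF Q l] l show ?thesis
    by (auto simp: bisector_midpoint_def bisects_def)
qed

lemma centroid_if_point_reflect_sides:
  assumes two: "(2::'a::field) \<noteq> 0" and Q: "quadrilateral A B A' B'"
    and A: "point_reflect p ` A = A'" and B: "point_reflect (p::'a \<times> 'a) ` B = B'"
  shows "centroid A B A' B' = p"
proof -
  note lines = quadrilateral_is_line[OF Q] and np = quadrilateral_not_parallel[OF Q]
  have A': "point_reflect p ` A' = A"
    using A by auto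
  have "point_reflect p (vertex A B) = vertex A' B'"
    using point_reflect_vertex[OF lines(1,2) np(1), of p] A B by simp
  moreover have "point_reflect p (vertex B A') = vertex B' A"
    using point_reflect_vertex[OF lines(2,3) np(2), of p] A' B by simp
  ultimately show ?thesis
    unfolding centroid_def by (metis pt_mid_point_reflect[OF two] pt_mid_same[OF two])
qed

lemma parallelogramI:
  assumes lines: "is_line A" "is_line D" "is_line A'" "is_line D'"
    and "A \<noteq> A'" "D \<noteq> D'" "parallel A A'" "parallel D D'" "\<not> parallel A D"
  shows "parallelogram A D A' D'"
proof -
  have "\<not> parallel D A'" "\<not> parallel A' D'" "\<not> parallel D' A"
    using assms parallel_trans[OF lines(1,3,2)] parallel_trans[OF lines(2,4,3)]
      parallel_trans[OF lines(1,4,2)] parallel_trans[OF lines(1,3,4)] by (metis parallel_commute)+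
  moreover have "A \<inter> A' = {}"
    using \<open>A \<noteq> A'\<close> \<open>parallel A A'\<close> by (simp add: parallel_def)
  ultimately show ?thesis
    using assms by (auto simp: parallelogram_def quadrilateral_def parallel_refl)
qed

lemma point_reflect_vertices_one_pair:
  assumes Q: "quadrilateral A B A' B'" and A: "point_reflect p ` A = A'" and B: "p \<in> B" "p \<in> B'"
  shows "point_reflect p (vertex A B) = vertex B A'" "point_reflect p (vertex A' B') = vertex B' A"
proof -
  note lines = quadrilateral_is_line[OF Q] and np = quadrilateral_not_parallel[OF Q]
  have "point_reflect p ` A' = A"
    using A by auto
  moreover have "point_reflect p ` B = B" "point_reflect p ` B' = B'"
    using point_reflect_line_through lines B by blast+
  ultimately show "point_reflect p (vertex A B) = vertex B A'" "point_reflect p (vertex A' B') = vertex B' A"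
    using point_reflect_vertex[OF lines(1,2) np(1), of p] point_reflect_vertex[OF lines(3,4) np(3), of p]
      A by (simp_all add: vertex_commute)
qed

lemma centroid_if_point_reflect_one_pair:
  assumes two: "(2::'a::field) \<noteq> 0" and Q: "quadrilateral A B A' B'"
    and A: "point_reflect p ` A = A'" and B: "(p::'a \<times> 'a) \<in> B" "p \<in> B'"
  shows "centroid A B A' B' = p"
  unfolding centroid_def
  by (simp flip: point_reflect_vertices_one_pair[OF Q A B]
      add: pt_mid_point_reflect_point_reflect[OF two] pt_mid_point_reflect[OF two])

lemma parallelogram_vertices_if_point_reflect_one_pair:
  assumes Q: "quadrilateral A B A' B'"
    and A: "point_reflect p ` A = A'" and B: "p \<in> B" "p \<in> B'"
  obtains C D C' D' where "parallelogram C D C' D'" "vertices C D C' D' = vertices A B A' B'"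
proof -
  note lines = quadrilateral_is_line[OF Q]
  define P1 where "P1 = vertex A B"
  define P2 where "P2 = vertex B A'"
  define P3 where "P3 = vertex A' B'"
  define P4 where "P4 = vertex B' A"
  have P1: "P1 \<in> A" "P1 \<in> B" and P2: "P2 \<in> B" "P2 \<in> A'"
    and P3: "P3 \<in> A'" "P3 \<in> B'" and P4: "P4 \<in> B'" "P4 \<in> A"
    unfolding P1_def P2_def P3_def P4_def using quadrilateral_vertex_in[OF Q] by simp_all
  have P1_P2: "point_reflect p P1 = P2" and P3_P4: "point_reflect p P3 = P4"
    unfolding P1_def P2_def P3_def P4_def by (rule point_reflect_vertices_one_pair[OF Q A B])+
  have "parallel A A'"
    using point_reflect_is_line(2)[OF lines(1), of p] A by simp
  moreover have "A \<noteq> A'" "B \<noteq> B'"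
    using Q by (auto simp: quadrilateral_def)
  ultimately have disj: "A \<inter> A' = {}"
    by (simp add: parallel_def)
  then have "P1 \<noteq> P3"
    using P1 P3 by blast
  then obtain D where D: "is_line D" "P1 \<in> D" "P3 \<in> D"
    by (rule line_through_two_points)
  define D' where "D' = point_reflect p ` D"
  have D': "is_line D'" "parallel D D'" "P2 \<in> D'" "P4 \<in> D'"
    unfolding D'_def P1_P2[symmetric] P3_P4[symmetric] using point_reflect_is_line[OF D(1)] D by auto
  have "A \<noteq> D" "A' \<noteq> D" "A \<noteq> D'" "A' \<noteq> D'"
    using P1 P2 P3 P4 D D' disj by blast+
  have "D \<noteq> D'"
  proof
    assume "D = D'"
    have "P1 = P4"
      using line_eq_if_two_common_points[OF lines(1) D(1) _ P1(1) P4(2) D(2)] D'(4)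
      unfolding \<open>D = D'\<close> using \<open>A \<noteq> D'\<close> by blast
    then have "P1 = p"
      using line_eq_if_two_common_points[OF lines(2,4) _ P1(2) B(1) _ B(2)] P4(1) \<open>B \<noteq> B'\<close> by blast
    with P1_P2 P1(1) P2(2) disj show False
      by auto
  qed
  have "parallelogram A D A' D'"
    using parallelogramI[OF lines(1) D(1) lines(3) D'(1) \<open>A \<noteq> A'\<close> \<open>D \<noteq> D'\<close> \<open>parallel A A'\<close> D'(2)]
      not_parallel_if_common_point[OF \<open>A \<noteq> D\<close> P1(1) D(2)] by blast
  moreover have "vertex A D = P1" "vertex D A' = P3" "vertex A' D' = P2" "vertex D' A = P4"
    using vertex_eq[OF lines(1) D(1) \<open>A \<noteq> D\<close> P1(1) D(2)]
      vertex_eq[OF D(1) lines(3) \<open>A' \<noteq> D\<close>[symmetric] D(3) P3(1)]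
      vertex_eq[OF lines(3) D'(1) \<open>A' \<noteq> D'\<close> P2(2) D'(3)]
      vertex_eq[OF D'(1) lines(1) \<open>A \<noteq> D'\<close>[symmetric] D'(4) P4(2)] by simp_all
  then have "vertices A D A' D' = vertices A B A' B'"
    by (auto simp: vertices_def P1_def P2_def P3_def P4_def)
  ultimately show ?thesis
    by (rule that)
qed

lemma centroid_parallelogram_if_symmetric_pairs:
  assumes two: "(2::'a::field) \<noteq> 0" and Q: "quadrilateral A B A' B'"
    and "symmetric_pair p A A'" "symmetric_pair (p::'a \<times> 'a) B B'"
  shows "centroid A B A' B' = p \<and>
    (\<exists>C D C' D'. parallelogram C D C' D' \<and> vertices C D C' D' = vertices A B A' B')"
proof -
  from assms(3,4) consider
      (both) "point_reflect p ` A = A'" "point_reflect p ` B = B'"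
    | (A) "point_reflect p ` A = A'" "p \<in> B" "p \<in> B'"
    | (B) "p \<in> A" "p \<in> A'" "point_reflect p ` B = B'"
    | (neither) "p \<in> A" "p \<in> A'" "p \<in> B" "p \<in> B'"
    unfolding symmetric_pair_def by blast
  then show ?thesis
  proof cases
    case both
    have "parallelogram A B A' B'"
      using Q point_reflect_is_line(2)[OF quadrilateral_is_line(1)[OF Q], of p]
        point_reflect_is_line(2)[OF quadrilateral_is_line(2)[OF Q], of p] both
      by (simp add: parallelogram_def)
    with centroid_if_point_reflect_sides[OF two Q both] show ?thesis
      by blast
  next
    case A
    obtain C D C' D' where "parallelogram C D C' D'" "vertices C D C' D' = vertices A B A' B'"
      by (rule parallelogram_vertices_if_point_reflect_one_pair[OF Q A])
    with centroid_if_point_reflect_one_pair[OF two Q A] show ?thesis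
      by blast
  next
    case B
    note Q' = quadrilateral_rotate[OF Q]
    obtain C D C' D' where "parallelogram C D C' D'" "vertices C D C' D' = vertices B A' B' A"
      by (rule parallelogram_vertices_if_point_reflect_one_pair[OF Q' B(3) B(2) B(1)])
    moreover have "centroid B A' B' A = p"
      by (rule centroid_if_point_reflect_one_pair[OF two Q' B(3) B(2) B(1)])
    ultimately show ?thesis
      unfolding centroid_rotate[where A = A and B = B and A' = A' and B' = B']
        vertices_rotate[where A = A and B = B and A' = A' and B' = B'] by blast
  next
    case neither
    with Q have False
      unfolding quadrilateral_def by blast
    then show ?thesis ..
  qed
qed

section \<open>Parallelograms\<close>

lemma parallelogram_point_reflect:
  assumes two: "(2::'a::field) \<noteq> 0" and P: "parallelogram C D C' D'"
  obtains p :: "'a::field \<times> 'a" where "point_reflect p ` C = C'" "point_reflect p ` D = D'"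
proof
  have Q: "quadrilateral C D C' D'" and "parallel C C'" "parallel D D'"
    using P by (simp_all add: parallelogram_def)
  note lines = quadrilateral_is_line[OF Q] and vertex_in = quadrilateral_vertex_in[OF Q]
  let ?p = "pt_mid (vertex C D) (vertex C' D')"
  have "point_reflect ?p (vertex C D) = vertex C' D'"
    by (rule point_reflect_pt_mid[OF two])
  then show "point_reflect ?p ` C = C'" "point_reflect ?p ` D = D'"
    using point_reflect_eq_if_parallel[OF lines(1,3) \<open>parallel C C'\<close> vertex_in(1)]
      point_reflect_eq_if_parallel[OF lines(2,4) \<open>parallel D D'\<close> vertex_in(2)] vertex_in(5,6) by simp_all
qed

lemma distinct_if_card_4: "card {x1, x2, x3, x4} = 4 \<Longrightarrow> distinct [x1, x2, x3, x4]"
  by (auto simp: card_insert_if split: if_splits)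

lemma fixpoint_free_involution_cases:
  assumes inv: "\<And>x. f (f x) = x" and dist: "distinct [x1, x2, x3, x4]"
    and perm: "\<And>x. x \<in> {x1, x2, x3, x4} \<Longrightarrow> f x \<in> {x1, x2, x3, x4} \<and> f x \<noteq> x"
  shows "(f x1 = x3 \<and> f x2 = x4) \<or> (f x1 = x2 \<and> f x3 = x4) \<or> (f x1 = x4 \<and> f x2 = x3)"
proof -
  have "f x1 \<in> {x2, x3, x4}" "f x2 \<in> {x1, x3, x4}" "f x3 \<in> {x1, x2, x4}"
    using perm[of x1] perm[of x2] perm[of x3] by auto
  with dist inv show ?thesis
    by auto (metis inv)+
qed

lemma card_vertices_parallelogram:
  assumes "parallelogram C D C' D'"
  shows "card (vertices C D C' D') = 4"
proof -
  have Q: "quadrilateral C D C' D'" and "parallel C C'" "parallel D D'"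
    using assms by (simp_all add: parallelogram_def)
  have "C \<noteq> C'" "D \<noteq> D'"
    using Q by (simp_all add: quadrilateral_def)
  with \<open>parallel C C'\<close> \<open>parallel D D'\<close> have "C \<inter> C' = {}" "D \<inter> D' = {}"
    by (simp_all add: parallel_def)
  with quadrilateral_vertex_in[OF Q] have "distinct [vertex C D, vertex D C', vertex C' D', vertex D' C]"
    by auto
  then show ?thesis
    by (simp add: vertices_def)
qed

lemma point_reflect_vertices_parallelogram:
  assumes P: "parallelogram C D C' D'"
    and C: "point_reflect p ` C = C'" and D: "point_reflect p ` D = D'"
    and x: "x \<in> vertices C D C' D'"
  shows "point_reflect p x \<in> vertices C D C' D'" "point_reflect p x \<noteq> x"
proof -
  have Q: "quadrilateral C D C' D'" and "parallel C C'"
    using P by (simp_all add: parallelogram_def)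
  moreover have "C \<noteq> C'"
    using Q by (simp add: quadrilateral_def)
  ultimately have disj: "C \<inter> C' = {}"
    by (simp add: parallel_def)
  note lines = quadrilateral_is_line[OF Q] and np = quadrilateral_not_parallel[OF Q]
  have C': "point_reflect p ` C' = C"
    using C by auto
  have "point_reflect p (vertex C D) = vertex C' D'" "point_reflect p (vertex D C') = vertex D' C"
    using point_reflect_vertex[OF lines(1,2) np(1), of p] point_reflect_vertex[OF lines(2,3) np(2), of p]
      C C' D by simp_all
  then have "point_reflect p (vertex C' D') = vertex C D" "point_reflect p (vertex D' C) = vertex D C'"
    by (metis point_reflect_point_reflect)+
  with x \<open>point_reflect p (vertex C D) = vertex C' D'\<close> \<open>point_reflect p (vertex D C') = vertex D' C\<close>
  show "point_reflect p x \<in> vertices C D C' D'"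
    by (auto simp: vertices_def)
  have "x \<in> C \<or> x \<in> C'"
    using x quadrilateral_vertex_in[OF Q] by (auto simp: vertices_def)
  then show "point_reflect p x \<noteq> x"
    using C C' disj by (metis disjoint_iff imageI)
qed

lemma symmetric_pair_if_point_reflect_points:
  assumes two: "(2::'a::field) \<noteq> 0" and L: "is_line L" and L': "is_line L'"
    and xy: "x \<noteq> y" "x \<in> L" "y \<in> L" and x'y': "x' \<in> L'" "y' \<in> L'"
    and reflect: "(point_reflect p x = x' \<and> point_reflect p y = y') \<or>
      (point_reflect p x = y \<and> point_reflect (p::'a \<times> 'a) x' = y')"
  shows "symmetric_pair p L L'"
  using reflect
proof
  assume "point_reflect p x = x' \<and> point_reflect p y = y'"
  with x'y' have "point_reflect p ` L = L'"
    using point_reflect_line_eq[OF L L' xy, of p] by simp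
  then show ?thesis
    by (simp add: symmetric_pair_def)
next
  assume "point_reflect p x = y \<and> point_reflect p x' = y'"
  then have "p \<in> L" "p \<in> L'"
    using center_in_line[OF two L xy(2)] center_in_line[OF two L' x'y'(1)] xy(3) x'y'(2) by simp_all
  then show ?thesis
    by (simp add: symmetric_pair_def)
qed

lemma symmetric_pairs_if_point_reflect_vertices:
  assumes two: "(2::'a::field) \<noteq> 0" and Q: "quadrilateral A B A' B'"
    and card: "card (vertices A B A' B') = 4"
    and refl: "\<And>x. x \<in> vertices A B A' B' \<Longrightarrow>
      point_reflect p x \<in> vertices A B A' B' \<and> point_reflect (p::'a \<times> 'a) x \<noteq> x"
  shows "symmetric_pair p A A' \<and> symmetric_pair p B B'"
proof -
  note lines = quadrilateral_is_line[OF Q]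
  define P1 where "P1 = vertex A B"
  define P2 where "P2 = vertex B A'"
  define P3 where "P3 = vertex A' B'"
  define P4 where "P4 = vertex B' A"
  have P1: "P1 \<in> A" "P1 \<in> B" and P2: "P2 \<in> B" "P2 \<in> A'"
    and P3: "P3 \<in> A'" "P3 \<in> B'" and P4: "P4 \<in> B'" "P4 \<in> A"
    unfolding P1_def P2_def P3_def P4_def using quadrilateral_vertex_in[OF Q] by simp_all
  have V: "vertices A B A' B' = {P1, P2, P3, P4}"
    by (simp add: vertices_def P1_def P2_def P3_def P4_def)
  have dist: "distinct [P1, P2, P3, P4]"
    using card distinct_if_card_4 by (simp add: V)
  then have "P1 \<noteq> P2" "P1 \<noteq> P4"
    by auto
  note A_pair = symmetric_pair_if_point_reflect_points[OF two lines(1,3) \<open>P1 \<noteq> P4\<close> P1(1) P4(2)]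
    and B_pair = symmetric_pair_if_point_reflect_points[OF two lines(2,4) \<open>P1 \<noteq> P2\<close> P1(2) P2(1)]
  have "(point_reflect p P1 = P3 \<and> point_reflect p P2 = P4) \<or>
      (point_reflect p P1 = P2 \<and> point_reflect p P3 = P4) \<or>
      (point_reflect p P1 = P4 \<and> point_reflect p P2 = P3)"
  proof (rule fixpoint_free_involution_cases[OF point_reflect_point_reflect dist])
    show "point_reflect p x \<in> {P1, P2, P3, P4} \<and> point_reflect p x \<noteq> x"
      if "x \<in> {P1, P2, P3, P4}" for x
      using refl that unfolding V .
  qed
  then consider "point_reflect p P1 = P3" "point_reflect p P2 = P4"
    | "point_reflect p P1 = P2" "point_reflect p P3 = P4"
    | "point_reflect p P1 = P4" "point_reflect p P2 = P3"
    by blast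
  then show ?thesis
  proof cases
    case 1
    then have "point_reflect p P4 = P2"
      by (metis point_reflect_point_reflect)
    with 1 show ?thesis
      using A_pair[OF P3(1) P2(2)] B_pair[OF P3(2) P4(1)] by blast
  next
    case 2
    then have "point_reflect p P4 = P3"
      by (metis point_reflect_point_reflect)
    with 2 show ?thesis
      using A_pair[OF P2(2) P3(1)] B_pair[OF P3(2) P4(1)] by blast
  next
    case 3
    then have "point_reflect p P3 = P2"
      by (metis point_reflect_point_reflect)
    with 3 show ?thesis
      using A_pair[OF P2(2) P3(1)] B_pair[OF P4(1) P3(2)] by blast
  qed
qed

lemma symmetric_pairs_if_parallelogram_vertices:
  assumes two: "(2::'a::field) \<noteq> 0" and Q: "quadrilateral A B A' B'"
    and P: "parallelogram C D C' D'" and V: "vertices C D C' D' = vertices A B A' B'"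
  obtains p :: "'a::field \<times> 'a" where "symmetric_pair p A A'" "symmetric_pair p B B'"
proof -
  obtain p where C: "point_reflect p ` C = C'" and D: "point_reflect p ` D = D'"
    using parallelogram_point_reflect[OF two P] .
  have card: "card (vertices A B A' B') = 4"
    using card_vertices_parallelogram[OF P] V by simp
  have "point_reflect p x \<in> vertices A B A' B' \<and> point_reflect p x \<noteq> x"
    if "x \<in> vertices A B A' B'" for x
    using point_reflect_vertices_parallelogram[OF P C D] that unfolding V by blast
  then have "symmetric_pair p A A' \<and> symmetric_pair p B B'"
    by (rule symmetric_pairs_if_point_reflect_vertices[OF two Q card])
  with that show ?thesis
    by blast
qed

theorem proposition3p5:
  fixes A B A' B' :: "('a::field \<times> 'a) set"
  assumes char: "(2::'a) \<noteq> 0"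
    and Q: "quadrilateral A B A' B'"
  shows "((\<exists>l1 l2 m. l1 \<noteq> l2 \<and> bisector_midpoint l1 A B A' B' m \<and> bisector_midpoint l2 A B A' B' m)
            \<longleftrightarrow> (\<exists>C D C' D'. parallelogram C D C' D' \<and> vertices C D C' D' = vertices A B A' B'))
         \<and> (\<forall>l1 l2 m. l1 \<noteq> l2 \<and> bisector_midpoint l1 A B A' B' m \<and> bisector_midpoint l2 A B A' B' m
              \<longrightarrow> m = Fin (centroid A B A' B'))"
proof -
  have centroid_parallelogram:
    "m = Fin (centroid A B A' B') \<and>
      (\<exists>C D C' D'. parallelogram C D C' D' \<and> vertices C D C' D' = vertices A B A' B')"
    if bisectors: "l1 \<noteq> l2" "bisector_midpoint l1 A B A' B' m" "bisector_midpoint l2 A B A' B' m"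
    for l1 l2 m
  proof -
    obtain p where "m = Fin p" "symmetric_pair p A A'" "symmetric_pair p B B'"
      using symmetric_pairs_if_common_bisector_midpoint[OF char Q bisectors] .
    then show ?thesis
      using centroid_parallelogram_if_symmetric_pairs[OF char Q] by simp
  qed
  have bisectors: "\<exists>l1 l2 m. l1 \<noteq> l2 \<and> bisector_midpoint l1 A B A' B' m \<and> bisector_midpoint l2 A B A' B' m"
    if parallelogram: "parallelogram C D C' D'" "vertices C D C' D' = vertices A B A' B'" for C D C' D'
  proof -
    obtain p where A: "symmetric_pair p A A'" and B: "symmetric_pair p B B'"
      using symmetric_pairs_if_parallelogram_vertices[OF char Q parallelogram] .
    obtain l1 l2 where "is_line l1" "is_line l2" "l1 \<noteq> l2" "p \<in> l1" "p \<in> l2"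
      by (rule two_lines_through_point)
    then have "bisector_midpoint l1 A B A' B' (Fin p)" "bisector_midpoint l2 A B A' B' (Fin p)"
      using bisector_midpoint_if_symmetric_pairs[OF char Q A B] by simp_all
    with \<open>l1 \<noteq> l2\<close> show ?thesis
      by blast
  qed
  show ?thesis
    using centroid_parallelogram bisectors by meson
qed

end
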